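(* Let $d=2$. Assume $\beta\ne0$, $|\sigma^{(1)}|\ne|\sigma^{(2)}|$, and for $\alpha=1,2$: $\eta^{(\alpha)}\ne0$ and $\mathbf v^{(\alpha)}_+\not\equiv0$, $\mathbf v^{(\alpha)}_-\not\equiv0$. Then $$\widetilde f_{e,l}\le f^{(1)}\le\widetilde f_{e,u}.$$ Moreover $\widetilde f_{e,l}=f^{(1)}$ if and only if $\mathbf v^{(1)}_+$ or $\mathbf v^{(1)}_-$ is a nonzero constant on phase 1, and $\widetilde f_{e,u}=f^{(1)}$ if and only if $\mathbf v^{(2)}_+$ or $\mathbf v^{(2)}_-$ is a nonzero constant on phase 2. Finally $f_{e,l}\le\widetilde f_{e,l}$, with equality if and only if $B^{(1)}_{12}f_{e,l}=\mathbf e^{(1)}_1\cdot R_\perp\mathbf e^{(1)}_2$, and $\widetilde f_{e,u}\le f_{e,u}$, with equality if and only if $B^{(2)}_{12}(1-f_{e,u})=\mathbf e^{(2)}_1\cdot R_\perp\mathbf e^{(2)}_2$.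
   Context: Let $\Omega\subset\mathbb{R}^2$ be a bounded Lipschitz domain and let $\chi^{(1)}$ be the indicator function of a measurable subset of $\Omega$ ("phase 1"), $\chi^{(2)}=1-\chi^{(1)}$ ("phase 2"). Let $\sigma^{(\alpha)}=\sigma^{(\alpha)}_1+\mathrm{i}\sigma^{(\alpha)}_2$ ($\alpha=1,2$) be complex constants with $\sigma^{(\alpha)}_1>0$ and $\sigma^{(1)}\neq\sigma^{(2)}$, and $\sigma=\sigma^{(1)}\chi^{(1)}+\sigma^{(2)}\chi^{(2)}$. Let $V\in H^1(\Omega;\mathbb C)$ be a weak solution of $\nabla\cdot(\sigma\nabla V)=0$ in $\Omega$. Set $\mathbf E=-\nabla V=\mathbf E_1+\mathrm{i}\mathbf E_2$ with $\mathbf E_1,\mathbf E_2$ real. $\langle u\rangle=|\Omega|^{-1}\int_\Omega u$; $f^{(1)}=\langle\chi^{(1)}\rangle\in(0,1)$. For $\alpha,m=1,2$: $\mathbf E^{(\alpha)}_m=\chi^{(\alpha)}\mathbf E_m$, $\mathbf e^{(\alpha)}_m=\langle\mathbf E^{(\alpha)}_m\rangle$, $\eta^{(\alpha)}=\langle\|\mathbf E^{(\alpha)}_1\|^2\rangle+\langle\|\mathbf E^{(\alpha)}_2\|^2\rangle$. $\beta=\sigma^{(1)}_1\sigma^{(2)}_2-\sigma^{(1)}_2\sigma^{(2)}_1$. $f_{e,l}=(\|\mathbf e^{(1)}_1\|^2+\|\mathbf e^{(1)}_2\|^2)/\eta^{(1)}$, $f_{e,u}=1-(\|\mathbf e^{(2)}_1\|^2+\|\mathbf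 e^{(2)}_2\|^2)/\eta^{(2)}$. Let $R_\perp=\begin{bmatrix}0&1\\-1&0\end{bmatrix}$, $B^{(\alpha)}_{12}=\langle\mathbf E^{(\alpha)}_1\cdot R_\perp\mathbf E^{(\alpha)}_2\rangle$, and $\mathbf v^{(\alpha)}_\pm=\mathbf E^{(\alpha)}_1\pm R_\perp\mathbf E^{(\alpha)}_2$. Define $$\widetilde f_{e,l}=\max\Big\{\frac{\|\langle\mathbf v^{(1)}_-\rangle\|^2}{\langle\|\mathbf v^{(1)}_-\|^2\rangle},\frac{\|\langle\mathbf v^{(1)}_+\rangle\|^2}{\langle\|\mathbf v^{(1)}_+\|^2\rangle}\Big\},\qquad \widetilde f_{e,u}=\min\Big\{1-\frac{\|\langle\mathbf v^{(2)}_-\rangle\|^2}{\langle\|\mathbf v^{(2)}_-\|^2\rangle},1-\frac{\|\langle\mathbf v^{(2)}_+\rangle\|^2}{\langle\|\mathbf v^{(2)}_+\|^2\rangle}\Big\}.$$ *)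

theory Defs
  imports "HOL-Analysis.Analysis"
begin

type_synonym pt = "real^2"

definition lipschitz_domain :: "pt set \<Rightarrow> bool" where
  "lipschitz_domain \<Omega> \<longleftrightarrow> open \<Omega> \<and> connected \<Omega> \<and> \<Omega> \<noteq> {} \<and> bounded \<Omega> \<and>
     (\<forall>p \<in> frontier \<Omega>. \<exists>r > 0. \<exists>(Q :: pt \<Rightarrow> pt) (L :: real) (g :: real \<Rightarrow> real).
        orthogonal_transformation Q \<and> lipschitz_on L UNIV g \<and>
        (\<forall>x \<in> ball p r. x \<in> \<Omega> \<longleftrightarrow> g ((Q (x - p)) $ 1) < (Q (x - p)) $ 2))"

definition test_fun :: "pt set \<Rightarrow> (pt \<Rightarrow> real) \<Rightarrow> (pt \<Rightarrow> pt) \<Rightarrow> bool" where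
  "test_fun \<Omega> \<phi> D\<phi> \<longleftrightarrow>
     (\<forall>x. (\<phi> has_derivative (\<lambda>h. D\<phi> x \<bullet> h)) (at x)) \<and> continuous_on UNIV D\<phi> \<and>
     compact (closure {x. \<phi> x \<noteq> 0}) \<and> closure {x. \<phi> x \<noteq> 0} \<subseteq> \<Omega>"

definition cvec :: "pt \<Rightarrow> pt \<Rightarrow> complex^2" where
  "cvec a b = (\<chi> i. Complex (a $ i) (b $ i))"

definition H1_with_field :: "pt set \<Rightarrow> (pt \<Rightarrow> complex) \<Rightarrow> (pt \<Rightarrow> pt) \<Rightarrow> (pt \<Rightarrow> pt) \<Rightarrow> bool" where
  "H1_with_field \<Omega> V E1 E2 \<longleftrightarrow>
     V \<in> borel_measurable (lebesgue_on \<Omega>) \<and> integrable (lebesgue_on \<Omega>) (\<lambda>x. (cmod (V x))\<^sup>2) \<and>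
     E1 \<in> borel_measurable (lebesgue_on \<Omega>) \<and> integrable (lebesgue_on \<Omega>) (\<lambda>x. (norm (E1 x))\<^sup>2) \<and>
     E2 \<in> borel_measurable (lebesgue_on \<Omega>) \<and> integrable (lebesgue_on \<Omega>) (\<lambda>x. (norm (E2 x))\<^sup>2) \<and>
     (\<forall>\<phi> D\<phi>. test_fun \<Omega> \<phi> D\<phi> \<longrightarrow> (\<forall>i.
        integral\<^sup>L (lebesgue_on \<Omega>) (\<lambda>x. V x * complex_of_real (D\<phi> x $ i))
        = - integral\<^sup>L (lebesgue_on \<Omega>) (\<lambda>x. (- cvec (E1 x) (E2 x)) $ i * complex_of_real (\<phi> x))))"

definition chi :: "pt set \<Rightarrow> nat \<Rightarrow> pt \<Rightarrow> real" where
  "chi P \<alpha> x = (if \<alpha> = 1 then indicator P x else 1 - indicator P x)"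

definition sigma_fun :: "complex \<Rightarrow> complex \<Rightarrow> pt set \<Rightarrow> pt \<Rightarrow> complex" where
  "sigma_fun s1 s2 P x = s1 * complex_of_real (chi P 1 x) + s2 * complex_of_real (chi P 2 x)"

text \<open>Weak solution of div(sigma grad V) = 0 (tested with real C^1_c functions), grad V = -(E1 + i E2).\<close>
definition weak_solution :: "pt set \<Rightarrow> (pt \<Rightarrow> complex) \<Rightarrow> complex \<Rightarrow> complex \<Rightarrow> pt set \<Rightarrow> (pt \<Rightarrow> pt) \<Rightarrow> (pt \<Rightarrow> pt) \<Rightarrow> bool" where
  "weak_solution \<Omega> V s1 s2 P E1 E2 \<longleftrightarrow> H1_with_field \<Omega> V E1 E2 \<and>
     (\<forall>\<phi> D\<phi>. test_fun \<Omega> \<phi> D\<phi> \<longrightarrow>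
        integral\<^sup>L (lebesgue_on \<Omega>) (\<lambda>x. sigma_fun s1 s2 P x *
           (\<Sum>i\<in>UNIV. (- cvec (E1 x) (E2 x)) $ i * complex_of_real (D\<phi> x $ i))) = 0)"

definition avg :: "pt set \<Rightarrow> (pt \<Rightarrow> 'b::{banach,second_countable_topology}) \<Rightarrow> 'b" where
  "avg \<Omega> u = (1 / measure lebesgue \<Omega>) *\<^sub>R integral\<^sup>L (lebesgue_on \<Omega>) u"

definition Rperp :: "real^2^2" where
  "Rperp = vector [vector [0, 1], vector [-1, 0]]"

definition Eph :: "pt set \<Rightarrow> nat \<Rightarrow> (pt \<Rightarrow> pt) \<Rightarrow> pt \<Rightarrow> pt" where
  "Eph P \<alpha> Em x = chi P \<alpha> x *\<^sub>R Em x"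

definition vplus :: "pt set \<Rightarrow> nat \<Rightarrow> (pt \<Rightarrow> pt) \<Rightarrow> (pt \<Rightarrow> pt) \<Rightarrow> pt \<Rightarrow> pt" where
  "vplus P \<alpha> E1 E2 x = Eph P \<alpha> E1 x + Rperp *v Eph P \<alpha> E2 x"

definition vminus :: "pt set \<Rightarrow> nat \<Rightarrow> (pt \<Rightarrow> pt) \<Rightarrow> (pt \<Rightarrow> pt) \<Rightarrow> pt \<Rightarrow> pt" where
  "vminus P \<alpha> E1 E2 x = Eph P \<alpha> E1 x - Rperp *v Eph P \<alpha> E2 x"

definition eta :: "pt set \<Rightarrow> pt set \<Rightarrow> nat \<Rightarrow> (pt \<Rightarrow> pt) \<Rightarrow> (pt \<Rightarrow> pt) \<Rightarrow> real" where
  "eta \<Omega> P \<alpha> E1 E2 = avg \<Omega> (\<lambda>x. (norm (Eph P \<alpha> E1 x))\<^sup>2) + avg \<Omega> (\<lambda>x. (norm (Eph P \<alpha> E2 x))\<^sup>2)"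

definition Bcoef :: "pt set \<Rightarrow> pt set \<Rightarrow> nat \<Rightarrow> (pt \<Rightarrow> pt) \<Rightarrow> (pt \<Rightarrow> pt) \<Rightarrow> real" where
  "Bcoef \<Omega> P \<alpha> E1 E2 = avg \<Omega> (\<lambda>x. Eph P \<alpha> E1 x \<bullet> (Rperp *v Eph P \<alpha> E2 x))"

definition ratio :: "pt set \<Rightarrow> (pt \<Rightarrow> pt) \<Rightarrow> real" where
  "ratio \<Omega> v = (norm (avg \<Omega> v))\<^sup>2 / avg \<Omega> (\<lambda>x. (norm (v x))\<^sup>2)"

definition f_el :: "pt set \<Rightarrow> pt set \<Rightarrow> (pt \<Rightarrow> pt) \<Rightarrow> (pt \<Rightarrow> pt) \<Rightarrow> real" where
  "f_el \<Omega> P E1 E2 = ((norm (avg \<Omega> (Eph P 1 E1)))\<^sup>2 + (norm (avg \<Omega> (Eph P 1 E2)))\<^sup>2) / eta \<Omega> P 1 E1 E2"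

definition f_eu :: "pt set \<Rightarrow> pt set \<Rightarrow> (pt \<Rightarrow> pt) \<Rightarrow> (pt \<Rightarrow> pt) \<Rightarrow> real" where
  "f_eu \<Omega> P E1 E2 = 1 - ((norm (avg \<Omega> (Eph P 2 E1)))\<^sup>2 + (norm (avg \<Omega> (Eph P 2 E2)))\<^sup>2) / eta \<Omega> P 2 E1 E2"

definition ft_el :: "pt set \<Rightarrow> pt set \<Rightarrow> (pt \<Rightarrow> pt) \<Rightarrow> (pt \<Rightarrow> pt) \<Rightarrow> real" where
  "ft_el \<Omega> P E1 E2 = max (ratio \<Omega> (vminus P 1 E1 E2)) (ratio \<Omega> (vplus P 1 E1 E2))"

definition ft_eu :: "pt set \<Rightarrow> pt set \<Rightarrow> (pt \<Rightarrow> pt) \<Rightarrow> (pt \<Rightarrow> pt) \<Rightarrow> real" where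
  "ft_eu \<Omega> P E1 E2 = min (1 - ratio \<Omega> (vminus P 2 E1 E2)) (1 - ratio \<Omega> (vplus P 2 E1 E2))"

end

theory Submission
  imports Defs
begin

text \<open>On phase \<open>\<alpha>\<close> the fields \<open>v\<^sub>\<plusminus> = E\<^sub>1 \<plusminus> R\<^sub>\<perp>E\<^sub>2\<close> vanish off the phase, so Cauchy--Schwarz
against the indicator \<open>\<chi>\<close> gives \<open>|\<langle>v\<rangle>|\<^sup>2 \<le> \<langle>\<chi>\<rangle> \<langle>|v|\<^sup>2\<rangle>\<close>, with equality iff \<open>v\<close> is a.e. constant on
the phase; this bounds both ratios by the volume fraction. Since \<open>R\<^sub>\<perp>\<close> is an isometry,
\<open>\<langle>|v\<^sub>\<plusminus>|\<^sup>2\<rangle> = \<eta> \<plusminus> 2B\<close> and \<open>|\<langle>v\<^sub>\<plusminus>\<rangle>|\<^sup>2 = a \<plusminus> 2b\<close> with \<open>a = |e\<^sub>1|\<^sup>2 + |e\<^sub>2|\<^sup>2\<close>, \<open>b = e\<^sub>1 \<bullet> R\<^sub>\<perp>e\<^sub>2\<close>;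
hence \<open>a/\<eta>\<close> is the mean of the two ratios \<open>(a \<plusminus> 2b)/(\<eta> \<plusminus> 2B)\<close> weighted by \<open>\<eta> \<plusminus> 2B\<close>, so it is
at most their maximum, with equality iff \<open>B a/\<eta> = b\<close>. Only the square integrability of the
field enters.\<close>

definition square_integrable :: "'a measure \<Rightarrow> ('a \<Rightarrow> 'b::{banach, second_countable_topology}) \<Rightarrow> bool" where
  "square_integrable M f \<longleftrightarrow> f \<in> borel_measurable M \<and> integrable M (\<lambda>x. (norm (f x))\<^sup>2)"

lemma square_integrableI_bound:
  fixes f :: "'a \<Rightarrow> 'b::{banach, second_countable_topology}"
  assumes f: "f \<in> borel_measurable M" and h: "integrable M h"
    and le: "\<And>x. (norm (f x))\<^sup>2 \<le> h x"
  shows "square_integrable M f"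
proof -
  have "(\<lambda>x. (norm (f x))\<^sup>2) \<in> borel_measurable M" using f by measurable
  moreover have "AE x in M. norm ((norm (f x))\<^sup>2) \<le> norm (h x)"
    using le by (intro AE_I2) (simp add: order_trans[OF _ abs_ge_self])
  ultimately have "integrable M (\<lambda>x. (norm (f x))\<^sup>2)"
    by (rule Bochner_Integration.integrable_bound[OF h])
  with f show ?thesis by (simp add: square_integrable_def)
qed

lemma square_integrable_integrable:
  assumes "finite_measure M" and "square_integrable M f"
  shows "integrable M f"
proof -
  have f: "f \<in> borel_measurable M" and f2: "integrable M (\<lambda>x. (norm (f x))\<^sup>2)"
    using assms(2) by (simp_all add: square_integrable_def)
  have "(\<lambda>x. norm (f x)) \<in> borel_measurable M" using f by measurable
  then have "integrable M (\<lambda>x. norm (f x))"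
    using finite_measure.square_integrable_imp_integrable[OF assms(1)] f2 by blast
  with f show ?thesis by (simp add: integrable_norm_iff)
qed

lemma power2_le_sum_power2:
  fixes x y z :: real
  assumes "0 \<le> z" and "z \<le> x + y"
  shows "z\<^sup>2 \<le> 2 * x\<^sup>2 + 2 * y\<^sup>2"
proof -
  have "z\<^sup>2 \<le> (x + y)\<^sup>2" using assms by (simp add: power_mono)
  also have "\<dots> \<le> 2 * x\<^sup>2 + 2 * y\<^sup>2" using sum_squares_bound[of x y] by (simp add: power2_sum)
  finally show ?thesis .
qed

lemma square_integrable_add:
  assumes f: "square_integrable M f" and g: "square_integrable M g"
  shows "square_integrable M (\<lambda>x. f x + g x)"
proof (rule square_integrableI_bound)
  show "(\<lambda>x. f x + g x) \<in> borel_measurable M"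
    using f g by (simp add: square_integrable_def borel_measurable_add)
  show "integrable M (\<lambda>x. 2 * (norm (f x))\<^sup>2 + 2 * (norm (g x))\<^sup>2)"
    using f g by (simp add: square_integrable_def)
  show "(norm (f x + g x))\<^sup>2 \<le> 2 * (norm (f x))\<^sup>2 + 2 * (norm (g x))\<^sup>2" for x
    by (rule power2_le_sum_power2[OF norm_ge_zero norm_triangle_ineq])
qed

lemma square_integrable_diff:
  assumes f: "square_integrable M f" and g: "square_integrable M g"
  shows "square_integrable M (\<lambda>x. f x - g x)"
proof (rule square_integrableI_bound)
  show "(\<lambda>x. f x - g x) \<in> borel_measurable M"
    using f g by (simp add: square_integrable_def borel_measurable_diff)
  show "integrable M (\<lambda>x. 2 * (norm (f x))\<^sup>2 + 2 * (norm (g x))\<^sup>2)"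
    using f g by (simp add: square_integrable_def)
  show "(norm (f x - g x))\<^sup>2 \<le> 2 * (norm (f x))\<^sup>2 + 2 * (norm (g x))\<^sup>2" for x
    by (rule power2_le_sum_power2[OF norm_ge_zero norm_triangle_ineq4])
qed

lemma square_integrable_bounded_linear:
  assumes T: "bounded_linear T" and f: "square_integrable M f"
  shows "square_integrable M (\<lambda>x. T (f x))"
proof -
  obtain K where K: "\<And>y. norm (T y) \<le> norm y * K"
    using bounded_linear.bounded[OF T] by blast
  show ?thesis
  proof (rule square_integrableI_bound)
    show "(\<lambda>x. T (f x)) \<in> borel_measurable M"
      using f by (intro borel_measurable_continuous_on[OF linear_continuous_on[OF T]])
        (simp add: square_integrable_def)
    show "integrable M (\<lambda>x. K\<^sup>2 * (norm (f x))\<^sup>2)"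
      using f by (simp add: square_integrable_def)
    show "(norm (T (f x)))\<^sup>2 \<le> K\<^sup>2 * (norm (f x))\<^sup>2" for x
      using power_mono[OF K[of "f x"]] by (simp add: power_mult_distrib mult.commute)
  qed
qed

lemma square_integrable_scaleR_cutoff:
  assumes g: "g \<in> borel_measurable M" and g_le: "\<And>x. \<bar>g x\<bar> \<le> 1"
    and f: "square_integrable M f"
  shows "square_integrable M (\<lambda>x. g x *\<^sub>R f x)"
proof (rule square_integrableI_bound)
  show "(\<lambda>x. g x *\<^sub>R f x) \<in> borel_measurable M"
    using f g by (simp add: square_integrable_def borel_measurable_scaleR)
  show "integrable M (\<lambda>x. (norm (f x))\<^sup>2)"
    using f by (simp add: square_integrable_def)
  show "(norm (g x *\<^sub>R f x))\<^sup>2 \<le> (norm (f x))\<^sup>2" for x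
    using mult_left_le_one_le[OF _ _ g_le[of x], of "norm (f x)"]
    by (intro power_mono) auto
qed

lemma integrable_inner_square_integrable:
  fixes f g :: "'a \<Rightarrow> 'b::euclidean_space"
  assumes "square_integrable M f" and "square_integrable M g"
  shows "integrable M (\<lambda>x. f x \<bullet> g x)"
proof (rule Bochner_Integration.integrable_bound)
  show "integrable M (\<lambda>x. (norm (f x))\<^sup>2 + (norm (g x))\<^sup>2)"
    using assms by (simp add: square_integrable_def)
  show "(\<lambda>x. f x \<bullet> g x) \<in> borel_measurable M"
    using assms by (simp add: square_integrable_def borel_measurable_inner)
  have "norm (a \<bullet> b) \<le> norm ((norm a)\<^sup>2 + (norm b)\<^sup>2)" for a b :: 'b
    using Cauchy_Schwarz_ineq2[of a b] sum_squares_bound[of "norm a" "norm b"]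
      mult_nonneg_nonneg[OF norm_ge_zero norm_ge_zero, of a b] by simp
  then show "AE x in M. norm (f x \<bullet> g x) \<le> norm ((norm (f x))\<^sup>2 + (norm (g x))\<^sup>2)"
    by simp
qed

lemma integrable_zero_one_valued:
  fixes g :: "'a \<Rightarrow> real"
  assumes "finite_measure M" and g: "g \<in> borel_measurable M" and g01: "\<And>x. g x = 0 \<or> g x = 1"
  shows "integrable M g"
proof -
  have "\<bar>g x\<bar> \<le> 1" for x using g01[of x] by auto
  then show ?thesis
    by (intro finite_measure.integrable_const_bound[OF assms(1) _ g, where B=1] AE_I2) simp
qed

lemma integral_norm_deviation_squared:
  fixes v :: "'a \<Rightarrow> 'b::euclidean_space"
  assumes fin: "finite_measure M"
    and g: "g \<in> borel_measurable M" and g01: "\<And>x. g x = 0 \<or> g x = 1"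
    and v: "square_integrable M v" and supp: "\<And>x. g x = 0 \<Longrightarrow> v x = 0"
  defines "c \<equiv> (1 / integral\<^sup>L M g) *\<^sub>R integral\<^sup>L M v"
  \<comment> \<open>no positivity of \<open>\<integral>g\<close> is needed: for \<open>\<integral>g = 0\<close> division by zero makes \<open>c = 0\<close>
     and both sides equal \<open>\<integral>|v|\<^sup>2\<close>\<close>
  shows "integral\<^sup>L M (\<lambda>x. (norm (v x - g x *\<^sub>R c))\<^sup>2)
      = integral\<^sup>L M (\<lambda>x. (norm (v x))\<^sup>2) - (norm (integral\<^sup>L M v))\<^sup>2 / integral\<^sup>L M g"
proof -
  define I where "I = integral\<^sup>L M g"
  define m where "m = integral\<^sup>L M v"
  have gi: "integrable M g" by (rule integrable_zero_one_valued[OF fin g g01])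
  have vi: "integrable M v" by (rule square_integrable_integrable[OF fin v])
  have v2i: "integrable M (\<lambda>x. (norm (v x))\<^sup>2)" using v by (simp add: square_integrable_def)
  have pointwise: "(norm (v x - g x *\<^sub>R c))\<^sup>2 = (norm (v x))\<^sup>2 - 2 * (v x \<bullet> c) + g x * (norm c)\<^sup>2" for x
    using g01[of x] supp[of x]
    by (auto simp: power2_norm_eq_inner inner_diff_left inner_diff_right inner_commute)
  have "integral\<^sup>L M (\<lambda>x. (norm (v x - g x *\<^sub>R c))\<^sup>2)
      = integral\<^sup>L M (\<lambda>x. (norm (v x))\<^sup>2) - 2 * (m \<bullet> c) + I * (norm c)\<^sup>2"
    unfolding pointwise using v2i vi gi by (simp add: m_def I_def)
  also have "\<dots> = integral\<^sup>L M (\<lambda>x. (norm (v x))\<^sup>2) - (norm m)\<^sup>2 / I"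
    by (cases "I = 0") (simp_all add: c_def I_def[symmetric] m_def[symmetric] dot_square_norm
        power2_eq_square field_simps)
  finally show ?thesis by (simp add: m_def I_def)
qed

lemma norm_integral_squared_le:
  fixes v :: "'a \<Rightarrow> 'b::euclidean_space"
  assumes "finite_measure M"
    and "g \<in> borel_measurable M" and "\<And>x. g x = 0 \<or> g x = 1"
    and "square_integrable M v" and "\<And>x. g x = 0 \<Longrightarrow> v x = 0"
    and pos: "0 < integral\<^sup>L M g"
  shows "(norm (integral\<^sup>L M v))\<^sup>2 \<le> integral\<^sup>L M g * integral\<^sup>L M (\<lambda>x. (norm (v x))\<^sup>2)"
proof -
  have "0 \<le> integral\<^sup>L M (\<lambda>x. (norm (v x - g x *\<^sub>R ((1 / integral\<^sup>L M g) *\<^sub>R integral\<^sup>L M v)))\<^sup>2)"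
    by simp
  also have "\<dots> = integral\<^sup>L M (\<lambda>x. (norm (v x))\<^sup>2) - (norm (integral\<^sup>L M v))\<^sup>2 / integral\<^sup>L M g"
    by (rule integral_norm_deviation_squared[OF assms(1-5)])
  finally show ?thesis using pos by (simp add: field_simps)
qed

lemma norm_integral_squared_eq_iff:
  fixes v :: "'a \<Rightarrow> 'b::euclidean_space"
  assumes fin: "finite_measure M"
    and g: "g \<in> borel_measurable M" and g01: "\<And>x. g x = 0 \<or> g x = 1"
    and v: "square_integrable M v" and supp: "\<And>x. g x = 0 \<Longrightarrow> v x = 0"
    and pos: "0 < integral\<^sup>L M g"
  shows "(norm (integral\<^sup>L M v))\<^sup>2 = integral\<^sup>L M g * integral\<^sup>L M (\<lambda>x. (norm (v x))\<^sup>2)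
    \<longleftrightarrow> (\<exists>c. AE x in M. g x = 1 \<longrightarrow> v x = c)"
proof -
  interpret finite_measure M by (rule fin)
  have g_le: "\<bar>g x\<bar> \<le> 1" for x using g01[of x] by auto
  have gi: "integrable M g" by (rule integrable_zero_one_valued[OF fin g g01])
  have v_meas: "v \<in> borel_measurable M" using v by (simp add: square_integrable_def)
  show ?thesis
  proof
    assume eq: "(norm (integral\<^sup>L M v))\<^sup>2 = integral\<^sup>L M g * integral\<^sup>L M (\<lambda>x. (norm (v x))\<^sup>2)"
    define c where "c = (1 / integral\<^sup>L M g) *\<^sub>R integral\<^sup>L M v"
    have "square_integrable M (\<lambda>x. g x *\<^sub>R c)"
      by (rule square_integrable_scaleR_cutoff[OF g g_le]) (simp add: square_integrable_def)
    then have dev: "integrable M (\<lambda>x. (norm (v x - g x *\<^sub>R c))\<^sup>2)"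
      using square_integrable_diff[OF v] by (simp add: square_integrable_def)
    have "integral\<^sup>L M (\<lambda>x. (norm (v x - g x *\<^sub>R c))\<^sup>2) = 0"
      using integral_norm_deviation_squared[OF fin g g01 v supp] eq pos by (simp add: c_def)
    then have "AE x in M. (norm (v x - g x *\<^sub>R c))\<^sup>2 = 0"
      using integral_nonneg_eq_0_iff_AE[OF dev] by simp
    then have "AE x in M. g x = 1 \<longrightarrow> v x = c" by eventually_elim simp
    then show "\<exists>c. AE x in M. g x = 1 \<longrightarrow> v x = c" ..
  next
    assume "\<exists>c. AE x in M. g x = 1 \<longrightarrow> v x = c"
    then obtain c where c: "AE x in M. g x = 1 \<longrightarrow> v x = c" ..
    have v_ae: "AE x in M. v x = g x *\<^sub>R c"
      using c by eventually_elim (metis g01 supp scaleR_one scaleR_zero_left)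
    have "integral\<^sup>L M v = integral\<^sup>L M (\<lambda>x. g x *\<^sub>R c)"
      using v_ae by (intro integral_cong_AE) (use v_meas g in simp_all)
    also have "\<dots> = integral\<^sup>L M g *\<^sub>R c" using gi by simp
    finally have m: "integral\<^sup>L M v = integral\<^sup>L M g *\<^sub>R c" .
    have gc: "(norm (g x *\<^sub>R c))\<^sup>2 = g x * (norm c)\<^sup>2" for x using g01[of x] by auto
    have "AE x in M. (norm (v x))\<^sup>2 = g x * (norm c)\<^sup>2"
      using v_ae by eventually_elim (simp only: gc)
    then have "integral\<^sup>L M (\<lambda>x. (norm (v x))\<^sup>2) = integral\<^sup>L M (\<lambda>x. g x * (norm c)\<^sup>2)"
      by (intro integral_cong_AE) (use v_meas g in simp_all)
    then show "(norm (integral\<^sup>L M v))\<^sup>2 = integral\<^sup>L M g * integral\<^sup>L M (\<lambda>x. (norm (v x))\<^sup>2)"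
      by (simp add: m power2_eq_square)
  qed
qed

lemma finite_measure_lebesgue_on:
  assumes "0 < measure lebesgue \<Omega>"
  shows "finite_measure (lebesgue_on \<Omega>)"
proof -
  have \<Omega>: "\<Omega> \<in> sets lebesgue" using assms measure_notin_sets by fastforce
  have "emeasure lebesgue \<Omega> \<noteq> \<infinity>" using assms measure_zero_top by fastforce
  with \<Omega> show ?thesis by (intro finite_measureI) (simp add: emeasure_restrict_space)
qed

lemma avg_add:
  assumes "integrable (lebesgue_on \<Omega>) f" and "integrable (lebesgue_on \<Omega>) g"
  shows "avg \<Omega> (\<lambda>x. f x + g x) = avg \<Omega> f + avg \<Omega> g"
  using assms by (simp add: avg_def scaleR_add_right)

lemma avg_diff:
  assumes "integrable (lebesgue_on \<Omega>) f" and "integrable (lebesgue_on \<Omega>) g"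
  shows "avg \<Omega> (\<lambda>x. f x - g x) = avg \<Omega> f - avg \<Omega> g"
  using assms by (simp add: avg_def scaleR_diff_right)

lemma avg_bounded_linear:
  assumes "bounded_linear T" and "integrable (lebesgue_on \<Omega>) f"
  shows "avg \<Omega> (\<lambda>x. T (f x)) = T (avg \<Omega> f)"
  using assms by (simp add: avg_def integral_bounded_linear linear_scale bounded_linear.linear)

lemma avg_mult_right:
  fixes f :: "pt \<Rightarrow> real"
  shows "avg \<Omega> (\<lambda>x. c * f x) = c * avg \<Omega> f"
  by (simp add: avg_def)

lemma avg_const:
  assumes "0 < measure lebesgue \<Omega>"
  shows "avg \<Omega> (\<lambda>x. c) = c"
proof -
  have "\<Omega> \<in> sets lebesgue" using assms measure_notin_sets by fastforce
  then have "measure (lebesgue_on \<Omega>) (space (lebesgue_on \<Omega>)) = measure lebesgue \<Omega>"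
    by (simp add: measure_restrict_space)
  with assms show ?thesis by (simp add: avg_def)
qed

lemma avg_norm_squared_pos:
  assumes mu: "0 < measure lebesgue \<Omega>" and v: "square_integrable (lebesgue_on \<Omega>) v"
    and nz: "\<not> (AE x in lebesgue_on \<Omega>. v x = 0)"
  shows "0 < avg \<Omega> (\<lambda>x. (norm (v x))\<^sup>2)"
proof -
  have v2: "integrable (lebesgue_on \<Omega>) (\<lambda>x. (norm (v x))\<^sup>2)"
    using v by (simp add: square_integrable_def)
  have "integral\<^sup>L (lebesgue_on \<Omega>) (\<lambda>x. (norm (v x))\<^sup>2) \<noteq> 0"
    using integral_nonneg_eq_0_iff_AE[OF v2] nz by simp
  moreover have "0 \<le> integral\<^sup>L (lebesgue_on \<Omega>) (\<lambda>x. (norm (v x))\<^sup>2)" by simp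
  ultimately have "0 < integral\<^sup>L (lebesgue_on \<Omega>) (\<lambda>x. (norm (v x))\<^sup>2)" by linarith
  with mu show ?thesis by (simp add: avg_def)
qed

lemma ratio_eq_integrals:
  "ratio \<Omega> v = (norm (integral\<^sup>L (lebesgue_on \<Omega>) v))\<^sup>2
     / (measure lebesgue \<Omega> * integral\<^sup>L (lebesgue_on \<Omega>) (\<lambda>x. (norm (v x))\<^sup>2))"
  by (cases "measure lebesgue \<Omega> = 0")
    (simp_all add: ratio_def avg_def power2_eq_square field_simps)

lemma ratio_le_avg:
  assumes mu: "0 < measure lebesgue \<Omega>"
    and g: "g \<in> borel_measurable (lebesgue_on \<Omega>)" and g01: "\<And>x. g x = 0 \<or> g x = 1"
    and v: "square_integrable (lebesgue_on \<Omega>) v" and supp: "\<And>x. g x = 0 \<Longrightarrow> v x = 0"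
    and pos: "0 < avg \<Omega> g"
  shows "ratio \<Omega> v \<le> avg \<Omega> g"
proof -
  define N where "N = (norm (integral\<^sup>L (lebesgue_on \<Omega>) v))\<^sup>2"
  define G where "G = integral\<^sup>L (lebesgue_on \<Omega>) g"
  define S where "S = integral\<^sup>L (lebesgue_on \<Omega>) (\<lambda>x. (norm (v x))\<^sup>2)"
  have G: "0 < G" using pos mu by (simp add: avg_def G_def zero_less_divide_iff)
  have "N \<le> G * S"
    unfolding N_def G_def S_def
    by (rule norm_integral_squared_le[OF finite_measure_lebesgue_on[OF mu] g g01 v supp G[unfolded G_def]])
  moreover have "0 \<le> S" by (simp add: S_def)
  ultimately have "N / (measure lebesgue \<Omega> * S) \<le> G / measure lebesgue \<Omega>"
    using mu G by (cases "S = 0") (simp_all add: field_simps)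
  then show ?thesis by (simp add: ratio_eq_integrals avg_def N_def G_def S_def)
qed

lemma ratio_eq_avg_iff:
  assumes mu: "0 < measure lebesgue \<Omega>"
    and g: "g \<in> borel_measurable (lebesgue_on \<Omega>)" and g01: "\<And>x. g x = 0 \<or> g x = 1"
    and v: "square_integrable (lebesgue_on \<Omega>) v" and supp: "\<And>x. g x = 0 \<Longrightarrow> v x = 0"
    and pos: "0 < avg \<Omega> g" and nz: "\<not> (AE x in lebesgue_on \<Omega>. v x = 0)"
  shows "ratio \<Omega> v = avg \<Omega> g \<longleftrightarrow> (\<exists>c. c \<noteq> 0 \<and> (AE x in lebesgue_on \<Omega>. g x = 1 \<longrightarrow> v x = c))"
proof -
  define N where "N = (norm (integral\<^sup>L (lebesgue_on \<Omega>) v))\<^sup>2"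
  define G where "G = integral\<^sup>L (lebesgue_on \<Omega>) g"
  define S where "S = integral\<^sup>L (lebesgue_on \<Omega>) (\<lambda>x. (norm (v x))\<^sup>2)"
  have G: "0 < G" using pos mu by (simp add: avg_def G_def zero_less_divide_iff)
  have "0 < S / measure lebesgue \<Omega>"
    using avg_norm_squared_pos[OF mu v nz] by (simp add: avg_def S_def)
  then have S: "0 < S" using mu by (simp add: zero_less_divide_iff)
  have "ratio \<Omega> v = avg \<Omega> g \<longleftrightarrow> N = G * S"
    using mu S by (simp add: ratio_eq_integrals avg_def N_def G_def S_def field_simps)
  also have "\<dots> \<longleftrightarrow> (\<exists>c. AE x in lebesgue_on \<Omega>. g x = 1 \<longrightarrow> v x = c)"
    unfolding N_def G_def S_def
    by (rule norm_integral_squared_eq_iff[OF finite_measure_lebesgue_on[OF mu] g g01 v supp G[unfolded G_def]])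
  also have "\<dots> \<longleftrightarrow> (\<exists>c. c \<noteq> 0 \<and> (AE x in lebesgue_on \<Omega>. g x = 1 \<longrightarrow> v x = c))"
  proof (intro iffI; elim exE conjE)
    fix c assume c: "AE x in lebesgue_on \<Omega>. g x = 1 \<longrightarrow> v x = c"
    have "c \<noteq> 0"
    proof
      assume "c = 0"
      have "AE x in lebesgue_on \<Omega>. v x = 0"
        using c by eventually_elim (metis g01 supp \<open>c = 0\<close>)
      with nz show False ..
    qed
    with c show "\<exists>c. c \<noteq> 0 \<and> (AE x in lebesgue_on \<Omega>. g x = 1 \<longrightarrow> v x = c)" by blast
  qed blast
  finally show ?thesis .
qed

lemma Rperp_mult_vector_nth: "(Rperp *v y) $ 1 = y $ 2" "(Rperp *v y) $ 2 = - (y $ 1)"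
  by (simp_all add: Rperp_def matrix_vector_mult_def sum_2)

lemma inner_Rperp_Rperp: "(Rperp *v x) \<bullet> (Rperp *v y) = x \<bullet> y"
  by (simp add: inner_vec_def sum_2 Rperp_mult_vector_nth)

lemma power2_norm_add_Rperp:
  "(norm (a + Rperp *v b))\<^sup>2 = (norm a)\<^sup>2 + (norm b)\<^sup>2 + 2 * (a \<bullet> (Rperp *v b))"
  by (simp add: power2_norm_eq_inner inner_add_left inner_add_right inner_commute inner_Rperp_Rperp)

lemma power2_norm_diff_Rperp:
  "(norm (a - Rperp *v b))\<^sup>2 = (norm a)\<^sup>2 + (norm b)\<^sup>2 - 2 * (a \<bullet> (Rperp *v b))"
  by (simp add: power2_norm_eq_inner inner_diff_left inner_diff_right inner_commute inner_Rperp_Rperp)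

lemma
  assumes mu: "0 < measure lebesgue \<Omega>"
    and X: "square_integrable (lebesgue_on \<Omega>) X" and Y: "square_integrable (lebesgue_on \<Omega>) Y"
  shows avg_add_Rperp: "avg \<Omega> (\<lambda>x. X x + Rperp *v Y x) = avg \<Omega> X + Rperp *v avg \<Omega> Y"
    and avg_diff_Rperp: "avg \<Omega> (\<lambda>x. X x - Rperp *v Y x) = avg \<Omega> X - Rperp *v avg \<Omega> Y"
    and avg_norm_add_Rperp_squared: "avg \<Omega> (\<lambda>x. (norm (X x + Rperp *v Y x))\<^sup>2)
      = avg \<Omega> (\<lambda>x. (norm (X x))\<^sup>2) + avg \<Omega> (\<lambda>x. (norm (Y x))\<^sup>2) + 2 * avg \<Omega> (\<lambda>x. X x \<bullet> (Rperp *v Y x))"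
    and avg_norm_diff_Rperp_squared: "avg \<Omega> (\<lambda>x. (norm (X x - Rperp *v Y x))\<^sup>2)
      = avg \<Omega> (\<lambda>x. (norm (X x))\<^sup>2) + avg \<Omega> (\<lambda>x. (norm (Y x))\<^sup>2) - 2 * avg \<Omega> (\<lambda>x. X x \<bullet> (Rperp *v Y x))"
proof -
  note fin = finite_measure_lebesgue_on[OF mu]
  note R = matrix_vector_mul_bounded_linear[of Rperp]
  have XI: "integrable (lebesgue_on \<Omega>) X" by (rule square_integrable_integrable[OF fin X])
  have YI: "integrable (lebesgue_on \<Omega>) Y" by (rule square_integrable_integrable[OF fin Y])
  have RYI: "integrable (lebesgue_on \<Omega>) (\<lambda>x. Rperp *v Y x)" by (rule integrable_bounded_linear[OF R YI])
  have X2: "integrable (lebesgue_on \<Omega>) (\<lambda>x. (norm (X x))\<^sup>2)"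
    and Y2: "integrable (lebesgue_on \<Omega>) (\<lambda>x. (norm (Y x))\<^sup>2)"
    using X Y by (simp_all add: square_integrable_def)
  have XRY: "integrable (lebesgue_on \<Omega>) (\<lambda>x. X x \<bullet> (Rperp *v Y x))"
    by (rule integrable_inner_square_integrable[OF X square_integrable_bounded_linear[OF R Y]])
  show "avg \<Omega> (\<lambda>x. X x + Rperp *v Y x) = avg \<Omega> X + Rperp *v avg \<Omega> Y"
    by (simp add: avg_add[OF XI RYI] avg_bounded_linear[OF R YI])
  show "avg \<Omega> (\<lambda>x. X x - Rperp *v Y x) = avg \<Omega> X - Rperp *v avg \<Omega> Y"
    by (simp add: avg_diff[OF XI RYI] avg_bounded_linear[OF R YI])
  show "avg \<Omega> (\<lambda>x. (norm (X x + Rperp *v Y x))\<^sup>2)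
      = avg \<Omega> (\<lambda>x. (norm (X x))\<^sup>2) + avg \<Omega> (\<lambda>x. (norm (Y x))\<^sup>2) + 2 * avg \<Omega> (\<lambda>x. X x \<bullet> (Rperp *v Y x))"
    using X2 Y2 XRY by (simp add: power2_norm_add_Rperp avg_add avg_mult_right)
  show "avg \<Omega> (\<lambda>x. (norm (X x - Rperp *v Y x))\<^sup>2)
      = avg \<Omega> (\<lambda>x. (norm (X x))\<^sup>2) + avg \<Omega> (\<lambda>x. (norm (Y x))\<^sup>2) - 2 * avg \<Omega> (\<lambda>x. X x \<bullet> (Rperp *v Y x))"
    using X2 Y2 XRY by (simp add: power2_norm_diff_Rperp avg_add avg_diff avg_mult_right)
qed

lemma chi_cases: "chi P \<alpha> x = 0 \<or> chi P \<alpha> x = 1"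
  by (simp add: chi_def indicator_def)

lemma chi_1_eq_1_iff [simp]: "chi P 1 x = 1 \<longleftrightarrow> x \<in> P"
  and chi_2_eq_1_iff [simp]: "chi P 2 x = 1 \<longleftrightarrow> x \<notin> P"
  by (simp_all add: chi_def indicator_def)

lemma borel_measurable_chi:
  assumes "P \<in> sets lebesgue"
  shows "chi P \<alpha> \<in> borel_measurable (lebesgue_on \<Omega>)"
  unfolding chi_def using assms by (intro measurable_restrict_space1) simp

lemma square_integrable_Eph:
  assumes "P \<in> sets lebesgue" and "square_integrable (lebesgue_on \<Omega>) E"
  shows "square_integrable (lebesgue_on \<Omega>) (Eph P \<alpha> E)"
  unfolding Eph_def
proof (rule square_integrable_scaleR_cutoff[OF borel_measurable_chi[OF assms(1)] _ assms(2)])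
  show "\<bar>chi P \<alpha> x\<bar> \<le> 1" for x using chi_cases[of P \<alpha> x] by auto
qed

lemma
  fixes \<alpha> :: nat
  assumes mu: "0 < measure lebesgue \<Omega>" and P: "P \<in> sets lebesgue"
    and E1: "square_integrable (lebesgue_on \<Omega>) E1" and E2: "square_integrable (lebesgue_on \<Omega>) E2"
  defines "e1 \<equiv> avg \<Omega> (Eph P \<alpha> E1)" and "e2 \<equiv> avg \<Omega> (Eph P \<alpha> E2)"
  shows avg_norm_vplus_squared:
      "avg \<Omega> (\<lambda>x. (norm (vplus P \<alpha> E1 E2 x))\<^sup>2) = eta \<Omega> P \<alpha> E1 E2 + 2 * Bcoef \<Omega> P \<alpha> E1 E2"
    and avg_norm_vminus_squared:
      "avg \<Omega> (\<lambda>x. (norm (vminus P \<alpha> E1 E2 x))\<^sup>2) = eta \<Omega> P \<alpha> E1 E2 - 2 * Bcoef \<Omega> P \<alpha> E1 E2"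
    and ratio_vplus_eq: "ratio \<Omega> (vplus P \<alpha> E1 E2)
      = ((norm e1)\<^sup>2 + (norm e2)\<^sup>2 + 2 * (e1 \<bullet> (Rperp *v e2))) / (eta \<Omega> P \<alpha> E1 E2 + 2 * Bcoef \<Omega> P \<alpha> E1 E2)"
    and ratio_vminus_eq: "ratio \<Omega> (vminus P \<alpha> E1 E2)
      = ((norm e1)\<^sup>2 + (norm e2)\<^sup>2 - 2 * (e1 \<bullet> (Rperp *v e2))) / (eta \<Omega> P \<alpha> E1 E2 - 2 * Bcoef \<Omega> P \<alpha> E1 E2)"
proof -
  note X = square_integrable_Eph[OF P E1, of \<alpha>] and Y = square_integrable_Eph[OF P E2, of \<alpha>]
  have vplus: "vplus P \<alpha> E1 E2 = (\<lambda>x. Eph P \<alpha> E1 x + Rperp *v Eph P \<alpha> E2 x)"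
    and vminus: "vminus P \<alpha> E1 E2 = (\<lambda>x. Eph P \<alpha> E1 x - Rperp *v Eph P \<alpha> E2 x)"
    by (simp_all add: vplus_def vminus_def fun_eq_iff)
  show plus: "avg \<Omega> (\<lambda>x. (norm (vplus P \<alpha> E1 E2 x))\<^sup>2) = eta \<Omega> P \<alpha> E1 E2 + 2 * Bcoef \<Omega> P \<alpha> E1 E2"
    by (simp add: vplus avg_norm_add_Rperp_squared[OF mu X Y] eta_def Bcoef_def)
  show minus: "avg \<Omega> (\<lambda>x. (norm (vminus P \<alpha> E1 E2 x))\<^sup>2) = eta \<Omega> P \<alpha> E1 E2 - 2 * Bcoef \<Omega> P \<alpha> E1 E2"
    by (simp add: vminus avg_norm_diff_Rperp_squared[OF mu X Y] eta_def Bcoef_def)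
  show "ratio \<Omega> (vplus P \<alpha> E1 E2)
      = ((norm e1)\<^sup>2 + (norm e2)\<^sup>2 + 2 * (e1 \<bullet> (Rperp *v e2))) / (eta \<Omega> P \<alpha> E1 E2 + 2 * Bcoef \<Omega> P \<alpha> E1 E2)"
    unfolding ratio_def plus
    by (simp only: vplus avg_add_Rperp[OF mu X Y] power2_norm_add_Rperp e1_def e2_def)
  show "ratio \<Omega> (vminus P \<alpha> E1 E2)
      = ((norm e1)\<^sup>2 + (norm e2)\<^sup>2 - 2 * (e1 \<bullet> (Rperp *v e2))) / (eta \<Omega> P \<alpha> E1 E2 - 2 * Bcoef \<Omega> P \<alpha> E1 E2)"
    unfolding ratio_def minus
    by (simp only: vminus avg_diff_Rperp[OF mu X Y] power2_norm_diff_Rperp e1_def e2_def)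
qed

lemma
  fixes a b e B :: real
  assumes plus: "0 < e + 2 * B" and minus: "0 < e - 2 * B"
  shows div_le_max_shifted_div: "a / e \<le> max ((a - 2 * b) / (e - 2 * B)) ((a + 2 * b) / (e + 2 * B))"
    and div_eq_max_shifted_div_iff:
      "a / e = max ((a - 2 * b) / (e - 2 * B)) ((a + 2 * b) / (e + 2 * B)) \<longleftrightarrow> B * (a / e) = b"
proof -
  have e: "0 < e" using plus minus by linarith
  define d where "d = b * e - a * B"
  have up: "(a + 2 * b) / (e + 2 * B) - a / e = 2 * d / (e * (e + 2 * B))"
    using e plus by (simp add: d_def field_simps)
  have down: "(a - 2 * b) / (e - 2 * B) - a / e = - (2 * d / (e * (e - 2 * B)))"
    using e minus by (simp add: d_def field_simps)
  define p q where "p = (a + 2 * b) / (e + 2 * B)" and "q = (a - 2 * b) / (e - 2 * B)"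
  have "sgn (p - a / e) = sgn d" and "sgn (q - a / e) = - sgn d"
    unfolding p_def q_def up down using e plus minus by (simp_all add: sgn_mult sgn_divide)
  then have "a / e \<le> max q p \<and> (a / e = max q p \<longleftrightarrow> d = 0)"
    by (cases d "0::real" rule: linorder_cases) (auto simp: sgn_if split: if_splits)
  moreover have "d = 0 \<longleftrightarrow> B * (a / e) = b" using e by (auto simp: d_def field_simps)
  ultimately show "a / e \<le> max ((a - 2 * b) / (e - 2 * B)) ((a + 2 * b) / (e + 2 * B))"
    and "a / e = max ((a - 2 * b) / (e - 2 * B)) ((a + 2 * b) / (e + 2 * B)) \<longleftrightarrow> B * (a / e) = b"
    by (simp_all add: p_def q_def)
qed

lemma phase_bounds:
  fixes \<alpha> :: nat
  assumes mu: "0 < measure lebesgue \<Omega>" and P: "P \<in> sets lebesgue"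
    and E1: "square_integrable (lebesgue_on \<Omega>) E1" and E2: "square_integrable (lebesgue_on \<Omega>) E2"
    and pos: "0 < avg \<Omega> (chi P \<alpha>)"
    and nz_plus: "\<not> (AE x in lebesgue_on \<Omega>. vplus P \<alpha> E1 E2 x = 0)"
    and nz_minus: "\<not> (AE x in lebesgue_on \<Omega>. vminus P \<alpha> E1 E2 x = 0)"
  defines "r \<equiv> max (ratio \<Omega> (vminus P \<alpha> E1 E2)) (ratio \<Omega> (vplus P \<alpha> E1 E2))"
    and "e1 \<equiv> avg \<Omega> (Eph P \<alpha> E1)" and "e2 \<equiv> avg \<Omega> (Eph P \<alpha> E2)"
  shows max_ratio_le_avg_chi: "r \<le> avg \<Omega> (chi P \<alpha>)"
    and max_ratio_eq_avg_chi_iff: "r = avg \<Omega> (chi P \<alpha>) \<longleftrightarrow>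
        (\<exists>c. c \<noteq> 0 \<and> (AE x in lebesgue_on \<Omega>. chi P \<alpha> x = 1 \<longrightarrow> vplus P \<alpha> E1 E2 x = c))
      \<or> (\<exists>c. c \<noteq> 0 \<and> (AE x in lebesgue_on \<Omega>. chi P \<alpha> x = 1 \<longrightarrow> vminus P \<alpha> E1 E2 x = c))"
    and mean_ratio_le_max_ratio: "((norm e1)\<^sup>2 + (norm e2)\<^sup>2) / eta \<Omega> P \<alpha> E1 E2 \<le> r"
    and mean_ratio_eq_max_ratio_iff: "((norm e1)\<^sup>2 + (norm e2)\<^sup>2) / eta \<Omega> P \<alpha> E1 E2 = r \<longleftrightarrow>
        Bcoef \<Omega> P \<alpha> E1 E2 * (((norm e1)\<^sup>2 + (norm e2)\<^sup>2) / eta \<Omega> P \<alpha> E1 E2) = e1 \<bullet> (Rperp *v e2)"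
proof -
  note g = borel_measurable_chi[OF P, of \<alpha> \<Omega>]
  note X = square_integrable_Eph[OF P E1, of \<alpha>] and Y = square_integrable_Eph[OF P E2, of \<alpha>]
  note RY = square_integrable_bounded_linear[OF matrix_vector_mul_bounded_linear Y]
  have sq_plus: "square_integrable (lebesgue_on \<Omega>) (vplus P \<alpha> E1 E2)"
    using square_integrable_add[OF X RY] by (simp add: vplus_def[abs_def])
  have sq_minus: "square_integrable (lebesgue_on \<Omega>) (vminus P \<alpha> E1 E2)"
    using square_integrable_diff[OF X RY] by (simp add: vminus_def[abs_def])
  have supp_plus: "chi P \<alpha> x = 0 \<Longrightarrow> vplus P \<alpha> E1 E2 x = 0"
    and supp_minus: "chi P \<alpha> x = 0 \<Longrightarrow> vminus P \<alpha> E1 E2 x = 0" for x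
    by (simp_all add: vplus_def vminus_def Eph_def)
  note le_plus = ratio_le_avg[OF mu g chi_cases sq_plus supp_plus pos]
    and le_minus = ratio_le_avg[OF mu g chi_cases sq_minus supp_minus pos]
    and eq_plus = ratio_eq_avg_iff[OF mu g chi_cases sq_plus supp_plus pos nz_plus]
    and eq_minus = ratio_eq_avg_iff[OF mu g chi_cases sq_minus supp_minus pos nz_minus]
  show "r \<le> avg \<Omega> (chi P \<alpha>)" using le_plus le_minus by (simp add: r_def)
  show "r = avg \<Omega> (chi P \<alpha>) \<longleftrightarrow>
        (\<exists>c. c \<noteq> 0 \<and> (AE x in lebesgue_on \<Omega>. chi P \<alpha> x = 1 \<longrightarrow> vplus P \<alpha> E1 E2 x = c))
      \<or> (\<exists>c. c \<noteq> 0 \<and> (AE x in lebesgue_on \<Omega>. chi P \<alpha> x = 1 \<longrightarrow> vminus P \<alpha> E1 E2 x = c))"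
    using le_plus le_minus eq_plus eq_minus by (auto simp: r_def max_def)
  have "0 < eta \<Omega> P \<alpha> E1 E2 + 2 * Bcoef \<Omega> P \<alpha> E1 E2"
    using avg_norm_squared_pos[OF mu sq_plus nz_plus] by (simp add: avg_norm_vplus_squared[OF mu P E1 E2])
  moreover have "0 < eta \<Omega> P \<alpha> E1 E2 - 2 * Bcoef \<Omega> P \<alpha> E1 E2"
    using avg_norm_squared_pos[OF mu sq_minus nz_minus] by (simp add: avg_norm_vminus_squared[OF mu P E1 E2])
  ultimately show "((norm e1)\<^sup>2 + (norm e2)\<^sup>2) / eta \<Omega> P \<alpha> E1 E2 \<le> r"
    and "((norm e1)\<^sup>2 + (norm e2)\<^sup>2) / eta \<Omega> P \<alpha> E1 E2 = r \<longleftrightarrow>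
        Bcoef \<Omega> P \<alpha> E1 E2 * (((norm e1)\<^sup>2 + (norm e2)\<^sup>2) / eta \<Omega> P \<alpha> E1 E2) = e1 \<bullet> (Rperp *v e2)"
    unfolding r_def ratio_vplus_eq[OF mu P E1 E2] ratio_vminus_eq[OF mu P E1 E2] e1_def e2_def
    by (rule div_le_max_shifted_div, rule div_eq_max_shifted_div_iff)
qed

lemma avg_chi_2:
  assumes mu: "0 < measure lebesgue \<Omega>" and P: "P \<in> sets lebesgue"
  shows "avg \<Omega> (chi P 2) = 1 - avg \<Omega> (chi P 1)"
proof -
  note fin = finite_measure_lebesgue_on[OF mu]
  have chi1: "integrable (lebesgue_on \<Omega>) (chi P 1)"
    by (rule integrable_zero_one_valued[OF fin borel_measurable_chi[OF P] chi_cases])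
  have one: "integrable (lebesgue_on \<Omega>) (\<lambda>x. 1 :: real)"
    by (rule finite_measure.integrable_const[OF fin])
  have "chi P 2 = (\<lambda>x. 1 - chi P 1 x)" by (simp add: chi_def fun_eq_iff)
  then have "avg \<Omega> (chi P 2) = avg \<Omega> (\<lambda>x. 1 - chi P 1 x)" by simp
  also have "\<dots> = avg \<Omega> (\<lambda>x. 1) - avg \<Omega> (chi P 1)" by (rule avg_diff[OF one chi1])
  also have "\<dots> = 1 - avg \<Omega> (chi P 1)" by (simp only: avg_const[OF mu])
  finally show ?thesis .
qed

theorem mainTheorem7:
  fixes \<Omega> P :: "(real^2) set" and V :: "real^2 \<Rightarrow> complex" and E1 E2 :: "real^2 \<Rightarrow> real^2"
    and s1 s2 :: complex
  assumes dom: "lipschitz_domain \<Omega>"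
    and P_meas: "P \<in> sets lebesgue" and P_sub: "P \<subseteq> \<Omega>"
    and f1_pos: "0 < avg \<Omega> (chi P 1)" and f1_lt1: "avg \<Omega> (chi P 1) < 1"
    and s_pos: "0 < Re s1" "0 < Re s2" and s_ne: "s1 \<noteq> s2"
    and sol: "weak_solution \<Omega> V s1 s2 P E1 E2"
    and beta: "Re s1 * Im s2 - Im s1 * Re s2 \<noteq> 0"
    and abs_ne: "cmod s1 \<noteq> cmod s2"
    and eta_ne: "eta \<Omega> P 1 E1 E2 \<noteq> 0" "eta \<Omega> P 2 E1 E2 \<noteq> 0"
    and vp_nz: "\<not> (AE x in lebesgue_on \<Omega>. vplus P 1 E1 E2 x = 0)"
               "\<not> (AE x in lebesgue_on \<Omega>. vplus P 2 E1 E2 x = 0)"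
    and vm_nz: "\<not> (AE x in lebesgue_on \<Omega>. vminus P 1 E1 E2 x = 0)"
               "\<not> (AE x in lebesgue_on \<Omega>. vminus P 2 E1 E2 x = 0)"
  shows "ft_el \<Omega> P E1 E2 \<le> avg \<Omega> (chi P 1) \<and> avg \<Omega> (chi P 1) \<le> ft_eu \<Omega> P E1 E2
    \<and> (ft_el \<Omega> P E1 E2 = avg \<Omega> (chi P 1) \<longleftrightarrow>
         (\<exists>c. c \<noteq> 0 \<and> (AE x in lebesgue_on \<Omega>. x \<in> P \<longrightarrow> vplus P 1 E1 E2 x = c))
       \<or> (\<exists>c. c \<noteq> 0 \<and> (AE x in lebesgue_on \<Omega>. x \<in> P \<longrightarrow> vminus P 1 E1 E2 x = c)))
    \<and> (ft_eu \<Omega> P E1 E2 = avg \<Omega> (chi P 1) \<longleftrightarrow>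
         (\<exists>c. c \<noteq> 0 \<and> (AE x in lebesgue_on \<Omega>. x \<notin> P \<longrightarrow> vplus P 2 E1 E2 x = c))
       \<or> (\<exists>c. c \<noteq> 0 \<and> (AE x in lebesgue_on \<Omega>. x \<notin> P \<longrightarrow> vminus P 2 E1 E2 x = c)))
    \<and> f_el \<Omega> P E1 E2 \<le> ft_el \<Omega> P E1 E2
    \<and> (f_el \<Omega> P E1 E2 = ft_el \<Omega> P E1 E2 \<longleftrightarrow>
         Bcoef \<Omega> P 1 E1 E2 * f_el \<Omega> P E1 E2 = avg \<Omega> (Eph P 1 E1) \<bullet> (Rperp *v avg \<Omega> (Eph P 1 E2)))
    \<and> ft_eu \<Omega> P E1 E2 \<le> f_eu \<Omega> P E1 E2
    \<and> (ft_eu \<Omega> P E1 E2 = f_eu \<Omega> P E1 E2 \<longleftrightarrow>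
         Bcoef \<Omega> P 2 E1 E2 * (1 - f_eu \<Omega> P E1 E2) = avg \<Omega> (Eph P 2 E1) \<bullet> (Rperp *v avg \<Omega> (Eph P 2 E2)))"
proof -
  have "measure lebesgue \<Omega> \<noteq> 0" using f1_pos by (auto simp: avg_def)
  then have mu: "0 < measure lebesgue \<Omega>" using measure_nonneg[of lebesgue \<Omega>] by linarith
  have E1: "square_integrable (lebesgue_on \<Omega>) E1" and E2: "square_integrable (lebesgue_on \<Omega>) E2"
    using sol by (simp_all add: weak_solution_def H1_with_field_def square_integrable_def)
  have f2: "avg \<Omega> (chi P 2) = 1 - avg \<Omega> (chi P 1)" by (rule avg_chi_2[OF mu P_meas])
  with f1_lt1 have f2_pos: "0 < avg \<Omega> (chi P 2)" by simp
  note phase1 = phase_bounds[OF mu P_meas E1 E2 f1_pos vp_nz(1) vm_nz(1), unfolded chi_1_eq_1_iff]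
  note phase2 = phase_bounds[OF mu P_meas E1 E2 f2_pos vp_nz(2) vm_nz(2), unfolded chi_2_eq_1_iff f2]
  define r1 r2 where "r1 = max (ratio \<Omega> (vminus P 1 E1 E2)) (ratio \<Omega> (vplus P 1 E1 E2))"
    and "r2 = max (ratio \<Omega> (vminus P 2 E1 E2)) (ratio \<Omega> (vplus P 2 E1 E2))"
  define q1 q2 where "q1 = ((norm (avg \<Omega> (Eph P 1 E1)))\<^sup>2 + (norm (avg \<Omega> (Eph P 1 E2)))\<^sup>2) / eta \<Omega> P 1 E1 E2"
    and "q2 = ((norm (avg \<Omega> (Eph P 2 E1)))\<^sup>2 + (norm (avg \<Omega> (Eph P 2 E2)))\<^sup>2) / eta \<Omega> P 2 E1 E2"
  have "ft_el \<Omega> P E1 E2 = r1" "ft_eu \<Omega> P E1 E2 = 1 - r2" "f_el \<Omega> P E1 E2 = q1" "f_eu \<Omega> P E1 E2 = 1 - q2"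
    by (simp_all add: ft_el_def ft_eu_def f_el_def f_eu_def r1_def r2_def q1_def q2_def min_def max_def)
  then show ?thesis
    using phase1[folded r1_def q1_def] phase2[folded r2_def q2_def] by auto
qed

end
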